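(* Let $\mathbb{X},\mathbb{X}'\subseteq\mathbb{P}^{k-1}$ be arithmetically Gorenstein sets of $\mathbb{F}_q$-rational points with $\Delta\mathrm{HF}_{\mathbb{X}}=\Delta\mathrm{HF}_{\mathbb{X}'}$ equal to $1,k-1,k-1,1$ in degrees $0,1,2,3$ and $0$ in degrees $\ge4$. Let $L,L'\in P_1$ be linear forms with $L$ vanishing at no point of $\mathbb{X}$ and $L'$ vanishing at no point of $\mathbb{X}'$, and let $\varphi_{\mathbb{X}},\varphi_{\mathbb{X}'}\in\mathcal{D}_{-3}$ be homogeneous elements with $(I_{\mathbb{X}}+\langle L\rangle)^\perp=P\circ\varphi_{\mathbb{X}}$ and $(I_{\mathbb{X}'}+\langle L'\rangle)^\perp=P\circ\varphi_{\mathbb{X}'}$. Let $A\in\mathrm{GL}_k(\mathbb{F}_q)$ satisfy $\lambda_A(L)=L'$. If $\Lambda_A(\mathbb{X})=\mathbb{X}'$, then there is $c\in\mathbb{F}_q\setminus\{0\}$ with $\varphi_{\mathbb{X}'}(\lambda_A(g))=c\,\varphi_{\mathbb{X}}(g)$ for all $g\in P_3$.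
   Context: $P=\mathbb{F}_q[x_1,\dots,x_k]$ standard graded. For a set $\mathbb{X}$ of distinct $\mathbb{F}_q$-rational points of $\mathbb{P}^{k-1}$, $I_{\mathbb{X}}$ is its homogeneous vanishing ideal, $R=P/I_{\mathbb{X}}$, $\mathrm{HF}_{\mathbb{X}}(i)=\dim R_i$ ($0$ for $i<0$), $\Delta\mathrm{HF}_{\mathbb{X}}(i)=\mathrm{HF}_{\mathbb{X}}(i)-\mathrm{HF}_{\mathbb{X}}(i-1)$. $\mathbb{X}$ is arithmetically Gorenstein if $R$ is Gorenstein; then $P/(I_{\mathbb{X}}+\langle L\rangle)$ is an Artinian Gorenstein ring (here with top degree 3). $\mathcal{D}=\bigoplus_j\mathcal{D}_{-j}$, $\mathcal{D}_{-j}=\mathrm{Hom}_{\mathbb{F}_q}(P_j,\mathbb{F}_q)$, is a $P$-module via contraction $(f\circ\psi)(g)=\psi(fg)$; for an ideal $J$, $J^\perp=\{\psi:f\circ\psi=0\ \forall f\in J\}$ and $P\circ\varphi$ is the submodule generated by $\varphi$. For $A\in\mathrm{GL}_k(\mathbb{F}_q)$, $\Lambda_A(p)=Ap$ on $\mathbb{P}^{k-1}$ and $\lambda_A:P\to P$ is the graded automorphism $\lambda_A(f)(v)=f(A^{-1}v)$. *)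

theory Defs
  imports "HOL-Analysis.Analysis" "HOL-Library.Poly_Mapping"
begin

text \<open>Polynomial ring P = F[x_i | i :: 'n], k = CARD('n), F = 'a a finite field.
  Monomials are ('n =>0 nat), polynomials are monomial =>0 coefficient.\<close>

type_synonym ('a, 'n) pol = "('n \<Rightarrow>\<^sub>0 nat) \<Rightarrow>\<^sub>0 'a"

definition mdeg :: "('n::finite \<Rightarrow>\<^sub>0 nat) \<Rightarrow> nat" where
  "mdeg m = (\<Sum>i\<in>UNIV. Poly_Mapping.lookup m i)"

definition homog :: "nat \<Rightarrow> ('a::zero, 'n::finite) pol \<Rightarrow> bool" where
  "homog d f \<longleftrightarrow> (\<forall>m\<in>Poly_Mapping.keys f. mdeg m = d)"

definition Pd :: "nat \<Rightarrow> ('a::zero, 'n::finite) pol set" where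
  "Pd d = {f. homog d f}"

definition const :: "'a::zero \<Rightarrow> ('a, 'n) pol" where
  "const c = Poly_Mapping.single 0 c"

definition var :: "'n \<Rightarrow> ('a::{zero,one}, 'n) pol" where
  "var i = Poly_Mapping.single (Poly_Mapping.single i 1) 1"

definition pscale :: "'a::field \<Rightarrow> ('a, 'n) pol \<Rightarrow> ('a, 'n) pol" where
  "pscale c f = Poly_Mapping.map (\<lambda>x. c * x) f"

definition pdim :: "('a::field, 'n) pol set \<Rightarrow> nat" where
  "pdim V = vector_space.dim pscale V"

definition mval :: "('n::finite \<Rightarrow>\<^sub>0 nat) \<Rightarrow> 'a::comm_ring_1 ^ 'n \<Rightarrow> 'a" where
  "mval m v = (\<Prod>i\<in>UNIV. (v $ i) ^ Poly_Mapping.lookup m i)"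

definition peval :: "('a::comm_ring_1, 'n::finite) pol \<Rightarrow> 'a ^ 'n \<Rightarrow> 'a" where
  "peval f v = (\<Sum>m\<in>Poly_Mapping.keys f. Poly_Mapping.lookup f m * mval m v)"

definition hval :: "nat \<Rightarrow> ('a::comm_ring_1, 'n::finite) pol \<Rightarrow> 'a ^ 'n \<Rightarrow> 'a" where
  "hval d f v = (\<Sum>m\<in>{m\<in>Poly_Mapping.keys f. mdeg m = d}. Poly_Mapping.lookup f m * mval m v)"

text \<open>Projective points of P^{k-1}(F): the nonzero vectors on a line through 0.\<close>
definition proj_pt :: "'a::field ^ 'n \<Rightarrow> ('a ^ 'n) set" where
  "proj_pt v = {c *s v | c. c \<noteq> 0}"

definition proj_points :: "('a::field ^ 'n) set set" where
  "proj_points = {proj_pt v | v. v \<noteq> 0}"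

definition vanishing_ideal :: "('a::field ^ 'n::finite) set set \<Rightarrow> ('a, 'n) pol set" where
  "vanishing_ideal X = {f. \<forall>d. \<forall>p\<in>X. \<forall>v\<in>p. hval d f v = 0}"

text \<open>Hilbert function HF_X(i) = dim (P/I_X)_i = dim P_i - dim (I_X)_i, and its first difference.\<close>
definition HF :: "('a::field ^ 'n::finite) set set \<Rightarrow> nat \<Rightarrow> nat" where
  "HF X i = pdim (Pd i :: ('a, 'n) pol set) - pdim (Pd i \<inter> vanishing_ideal X)"

fun dHF :: "('a::field ^ 'n::finite) set set \<Rightarrow> nat \<Rightarrow> int" where
  "dHF X 0 = int (HF X 0)"
| "dHF X (Suc i) = int (HF X (Suc i)) - int (HF X i)"

definition ideal_plus_lin :: "('a::comm_ring_1, 'n::finite) pol set \<Rightarrow> ('a, 'n) pol \<Rightarrow> ('a, 'n) pol set" where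
  "ideal_plus_lin I L = {f + L * g | f g. f \<in> I}"

text \<open>Artinian Gorenstein graded quotient P/J (J homogeneous): P/J is Artinian and its
  socle is one-dimensional (socle preimage S = {f. x_i f in J for all i}).\<close>
definition socle_pre :: "('a::comm_ring_1, 'n::finite) pol set \<Rightarrow> ('a, 'n) pol set" where
  "socle_pre J = {f. \<forall>i. var i * f \<in> J}"

definition artinian_gorenstein_quot :: "('a::field, 'n::finite) pol set \<Rightarrow> bool" where
  "artinian_gorenstein_quot J \<longleftrightarrow>
     (\<exists>d0. \<forall>d\<ge>d0. Pd d \<subseteq> J) \<and>
     (\<exists>d0. \<forall>d. pdim (Pd d \<inter> socle_pre J) = pdim (Pd d \<inter> J) + (if d = d0 then 1 else 0))"

text \<open>Arithmetically Gorenstein, via the Artinian reduction by a linear form vanishing at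
  no point of X (such a form is a non-zerodivisor on the 1-dimensional CM ring P/I_X).\<close>
definition arith_gorenstein :: "('a::field ^ 'n::finite) set set \<Rightarrow> bool" where
  "arith_gorenstein X \<longleftrightarrow> X \<subseteq> proj_points \<and>
     (\<forall>L\<in>Pd 1. (\<forall>p\<in>X. \<forall>v\<in>p. peval L v \<noteq> 0) \<longrightarrow>
        artinian_gorenstein_quot (ideal_plus_lin (vanishing_ideal X) L))"

text \<open>The module D = direct sum of Hom(P_j, F): a finitely supported functional on monomials
  (value on the monomial basis), acting on polynomials by linear extension.\<close>
definition Dmod :: "(('n \<Rightarrow>\<^sub>0 nat) \<Rightarrow> 'a::zero) set" where
  "Dmod = {\<psi>. finite {m. \<psi> m \<noteq> 0}}"

definition Dapply :: "(('n \<Rightarrow>\<^sub>0 nat) \<Rightarrow> 'a::comm_ring_1) \<Rightarrow> ('a, 'n) pol \<Rightarrow> 'a" where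
  "Dapply \<psi> g = (\<Sum>m\<in>Poly_Mapping.keys g. \<psi> m * Poly_Mapping.lookup g m)"

text \<open>Contraction: (f o psi)(g) = psi(f g), determined by its values on monomials.\<close>
definition contr :: "('a::comm_ring_1, 'n) pol \<Rightarrow> (('n \<Rightarrow>\<^sub>0 nat) \<Rightarrow> 'a) \<Rightarrow> (('n \<Rightarrow>\<^sub>0 nat) \<Rightarrow> 'a)" where
  "contr f \<psi> = (\<lambda>m. Dapply \<psi> (f * Poly_Mapping.single m 1))"

definition perp :: "('a::comm_ring_1, 'n) pol set \<Rightarrow> (('n \<Rightarrow>\<^sub>0 nat) \<Rightarrow> 'a) set" where
  "perp J = {\<psi>\<in>Dmod. \<forall>f\<in>J. contr f \<psi> = (\<lambda>_. 0)}"

definition gen_sub :: "(('n \<Rightarrow>\<^sub>0 nat) \<Rightarrow> 'a::comm_ring_1) \<Rightarrow> (('n \<Rightarrow>\<^sub>0 nat) \<Rightarrow> 'a) set" where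
  "gen_sub \<phi> = {contr f \<phi> | f. True}"

definition Dneg :: "nat \<Rightarrow> (('n::finite \<Rightarrow>\<^sub>0 nat) \<Rightarrow> 'a::zero) set" where
  "Dneg j = {\<psi>\<in>Dmod. \<forall>m. \<psi> m \<noteq> 0 \<longrightarrow> mdeg m = j}"

text \<open>Lambda_A on points and the graded automorphism lambda_A(f)(v) = f(A^{-1} v), i.e.
  the substitution x_i |-> sum_j (A^{-1})_{ij} x_j.\<close>
definition Lam_pt :: "'a::field ^ 'n ^ 'n \<Rightarrow> ('a ^ 'n) set \<Rightarrow> ('a ^ 'n) set" where
  "Lam_pt A p = (\<lambda>v. A *v v) ` p"

definition lam :: "'a::field ^ 'n::finite ^ 'n \<Rightarrow> ('a, 'n) pol \<Rightarrow> ('a, 'n) pol" where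
  "lam A f = (\<Sum>m\<in>Poly_Mapping.keys f. const (Poly_Mapping.lookup f m) *
      (\<Prod>i\<in>UNIV. (\<Sum>j\<in>UNIV. const (matrix_inv A $ i $ j) * var j) ^ Poly_Mapping.lookup m i))"

end

theory Submission
  imports Defs
begin

text \<open>The automorphism \<open>\<lambda>\<^sub>A\<close> substitutes the linear forms of \<open>A\<^sup>-\<^sup>1\<close> for the variables,
  so it is a ring endomorphism of \<open>P\<close>. It moves the points of \<open>X\<close> onto those of \<open>X'\<close> and sends
  \<open>L\<close> to \<open>L'\<close>, hence maps \<open>I\<^sub>X + \<langle>L\<rangle>\<close> into \<open>I\<^sub>X\<^sub>' + \<langle>L'\<rangle>\<close>. Therefore the pulled-back
  functional \<open>\<psi> = \<phi>\<^sub>X\<^sub>' \<circ> \<lambda>\<^sub>A\<close> annihilates \<open>I\<^sub>X + \<langle>L\<rangle>\<close>, i.e. \<open>\<psi> = f \<circ> \<phi>\<^sub>X\<close> for some \<open>f\<close>.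
  Since \<open>\<psi>\<close> and \<open>\<phi>\<^sub>X\<close> are both homogeneous of degree 3, only the constant term \<open>c\<close> of \<open>f\<close>
  contributes, so \<open>\<psi> = c \<phi>\<^sub>X\<close>. Finally \<open>c \<noteq> 0\<close>: otherwise \<open>\<phi>\<^sub>X\<^sub>' = 0\<close>, whereas the
  annihilator of \<open>I\<^sub>X\<^sub>' + \<langle>L'\<rangle>\<close> contains the constant-term functional as soon as \<open>X'\<close> is
  nonempty, which its Hilbert function forces.\<close>

lemma sum_keys_superset:
  assumes "finite S" "Poly_Mapping.keys f \<subseteq> S" "\<And>m. h m 0 = 0"
  shows "(\<Sum>m\<in>Poly_Mapping.keys f. h m (Poly_Mapping.lookup f m)) = (\<Sum>m\<in>S. h m (Poly_Mapping.lookup f m))"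
  by (rule sum.mono_neutral_left) (use assms in \<open>auto simp: in_keys_iff\<close>)

lemma poly_mapping_sum_single:
  "(\<Sum>m\<in>Poly_Mapping.keys f. Poly_Mapping.single m (Poly_Mapping.lookup f m)) = f"
  by (rule poly_mapping_eqI) (simp add: lookup_sum lookup_single when_def in_keys_iff)

lemma mult_eq_double_sum_single:
  "f * g = (\<Sum>a\<in>Poly_Mapping.keys f. \<Sum>b\<in>Poly_Mapping.keys g.
      Poly_Mapping.single a (Poly_Mapping.lookup f a) * Poly_Mapping.single b (Poly_Mapping.lookup g b))"
  by (subst (1 2) poly_mapping_sum_single[symmetric]) (simp add: sum_product)

lemma const_0 [simp]: "const 0 = 0" by (simp add: const_def)
lemma const_1 [simp]: "const 1 = 1" by (simp add: const_def)
lemma const_add: "const (a + b) = const a + const b" by (simp add: const_def single_add)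
lemma const_mult: "const (a * b) = const a * const b" by (simp add: const_def mult_single)
lemma const_sum: "const (sum f I) = (\<Sum>i\<in>I. const (f i))"
  by (induction I rule: infinite_finite_induct) (auto simp: const_add)

lemma single_eq_const_mult: "Poly_Mapping.single m c = const c * Poly_Mapping.single m 1"
  for c :: "'a::semiring_1"
  by (simp add: const_def mult_single)

lemma lookup_const_mult: "Poly_Mapping.lookup (const c * h) m = c * Poly_Mapping.lookup h m"
proof -
  have "const c * h = Poly_Mapping.map ((*) c) h"
    by (simp add: const_def mult_map_scale_conv_mult)
  then show ?thesis by (simp add: Poly_Mapping.map.rep_eq when_def)
qed

lemma keys_const_mult: "Poly_Mapping.keys (const c * h) \<subseteq> Poly_Mapping.keys h"
  by (auto simp: in_keys_iff lookup_const_mult)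

section \<open>Linear substitutions\<close>

definition lin_form :: "'a::comm_ring_1 ^ 'n::finite ^ 'n \<Rightarrow> 'n \<Rightarrow> ('a, 'n) pol" where
  "lin_form M i = (\<Sum>j\<in>UNIV. const (M $ i $ j) * var j)"

definition subst_monom :: "'a::comm_ring_1 ^ 'n::finite ^ 'n \<Rightarrow> ('n \<Rightarrow>\<^sub>0 nat) \<Rightarrow> ('a, 'n) pol" where
  "subst_monom M k = (\<Prod>i\<in>UNIV. lin_form M i ^ Poly_Mapping.lookup k i)"

definition lin_subst :: "'a::comm_ring_1 ^ 'n::finite ^ 'n \<Rightarrow> ('a, 'n) pol \<Rightarrow> ('a, 'n) pol" where
  "lin_subst M f = (\<Sum>m\<in>Poly_Mapping.keys f. const (Poly_Mapping.lookup f m) * subst_monom M m)"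

lemma lam_eq_lin_subst: "lam A f = lin_subst (matrix_inv A) f"
  by (simp add: lam_def lin_subst_def subst_monom_def lin_form_def)

lemma matrix_inv_mult:
  assumes "invertible A"
  shows "A ** matrix_inv A = mat 1" "matrix_inv A ** A = mat 1"
proof -
  obtain A' where "A ** A' = mat 1 \<and> A' ** A = mat 1"
    using assms unfolding invertible_def by blast
  then have "A ** matrix_inv A = mat 1 \<and> matrix_inv A ** A = mat 1"
    unfolding matrix_inv_def by (rule someI)
  then show "A ** matrix_inv A = mat 1" "matrix_inv A ** A = mat 1" by auto
qed

lemma lin_subst_superset:
  assumes "finite S" "Poly_Mapping.keys f \<subseteq> S"
  shows "lin_subst M f = (\<Sum>m\<in>S. const (Poly_Mapping.lookup f m) * subst_monom M m)"
  unfolding lin_subst_def by (rule sum_keys_superset[OF assms]) simp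

lemma lin_subst_0 [simp]: "lin_subst M 0 = 0" by (simp add: lin_subst_def)

lemma lin_subst_add: "lin_subst M (f + g) = lin_subst M f + lin_subst M g"
proof -
  let ?S = "Poly_Mapping.keys f \<union> Poly_Mapping.keys g"
  have "lin_subst M (f + g) = (\<Sum>m\<in>?S. const (Poly_Mapping.lookup (f + g) m) * subst_monom M m)"
    by (rule lin_subst_superset) (auto dest: keys_add[THEN subsetD])
  also have "\<dots> = lin_subst M f + lin_subst M g"
    by (simp add: lookup_add const_add distrib_right sum.distrib lin_subst_superset[of ?S])
  finally show ?thesis .
qed

lemma lin_subst_sum: "lin_subst M (sum F I) = (\<Sum>i\<in>I. lin_subst M (F i))"
  by (induction I rule: infinite_finite_induct) (auto simp: lin_subst_add)

lemma lin_subst_single: "lin_subst M (Poly_Mapping.single k c) = const c * subst_monom M k"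
  by (cases "c = 0") (auto simp: lin_subst_def)

lemma subst_monom_0 [simp]: "subst_monom M 0 = 1" by (simp add: subst_monom_def)

lemma subst_monom_add: "subst_monom M (a + b) = subst_monom M a * subst_monom M b"
  by (simp add: subst_monom_def lookup_add power_add prod.distrib)

lemma lin_subst_const [simp]: "lin_subst M (const c) = const c"
  by (simp add: const_def lin_subst_single)

lemma lin_subst_mult: "lin_subst M (f * g) = lin_subst M f * lin_subst M g"
proof -
  have single_mult: "lin_subst M (Poly_Mapping.single a x * Poly_Mapping.single b y) =
      lin_subst M (Poly_Mapping.single a x) * lin_subst M (Poly_Mapping.single b y)" for a b x y
    by (simp add: mult_single lin_subst_single subst_monom_add const_mult mult_ac)
  have "lin_subst M (f * g) = (\<Sum>a\<in>Poly_Mapping.keys f. \<Sum>b\<in>Poly_Mapping.keys g.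
      lin_subst M (Poly_Mapping.single a (Poly_Mapping.lookup f a)) *
      lin_subst M (Poly_Mapping.single b (Poly_Mapping.lookup g b)))"
    by (subst mult_eq_double_sum_single) (simp add: lin_subst_sum single_mult)
  also have "\<dots> = lin_subst M (\<Sum>a\<in>Poly_Mapping.keys f. Poly_Mapping.single a (Poly_Mapping.lookup f a)) *
      lin_subst M (\<Sum>b\<in>Poly_Mapping.keys g. Poly_Mapping.single b (Poly_Mapping.lookup g b))"
    by (simp add: lin_subst_sum sum_product)
  finally show ?thesis by (simp only: poly_mapping_sum_single)
qed

lemma lin_subst_1 [simp]: "lin_subst M 1 = 1"
  using lin_subst_single[of M 0 1] by (simp add: const_def)

lemma lin_subst_power: "lin_subst M (p ^ n) = lin_subst M p ^ n"
  by (induction n) (auto simp: lin_subst_mult)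

lemma lin_subst_prod: "lin_subst M (prod F I) = (\<Prod>i\<in>I. lin_subst M (F i))"
  by (induction I rule: infinite_finite_induct) (auto simp: lin_subst_mult)

lemma lin_subst_var: "lin_subst M (var j) = lin_form M j"
proof -
  have "lin_subst M (var j) = subst_monom M (Poly_Mapping.single j 1)"
    by (simp add: var_def lin_subst_single const_def)
  also have "\<dots> = (\<Prod>i\<in>UNIV. if i = j then lin_form M i else 1)"
    unfolding subst_monom_def by (rule prod.cong) (auto simp: lookup_single when_def)
  finally show ?thesis by simp
qed

lemma lin_subst_lin_form: "lin_subst M (lin_form N i) = lin_form (N ** M) i"
proof -
  have "lin_subst M (lin_form N i) =
      (\<Sum>j\<in>UNIV. const (N $ i $ j) * (\<Sum>l\<in>UNIV. const (M $ j $ l) * var l))"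
    by (simp add: lin_form_def lin_subst_sum lin_subst_mult lin_subst_var)
  also have "\<dots> = (\<Sum>l\<in>UNIV. \<Sum>j\<in>UNIV. const (N $ i $ j * M $ j $ l) * var l)"
    by (subst sum.swap) (simp add: sum_distrib_left const_mult mult_ac)
  also have "\<dots> = lin_form (N ** M) i"
    by (simp add: lin_form_def matrix_matrix_mult_def const_sum sum_distrib_right)
  finally show ?thesis .
qed

lemma lin_subst_subst_monom: "lin_subst M (subst_monom N k) = subst_monom (N ** M) k"
  by (simp add: subst_monom_def lin_subst_prod lin_subst_power lin_subst_lin_form)

lemma lin_subst_lin_subst: "lin_subst M (lin_subst N f) = lin_subst (N ** M) f"
  by (simp add: lin_subst_def[of N] lin_subst_def[of "N ** M"] lin_subst_sum lin_subst_mult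
      lin_subst_subst_monom)

lemma lin_form_mat_1: "lin_form (mat 1) i = var i"
proof -
  have "lin_form (mat 1) i = (\<Sum>l\<in>UNIV. if l = i then var l else 0)"
    unfolding lin_form_def by (rule sum.cong) (auto simp: mat_def)
  then show ?thesis by simp
qed

lemma var_power: "var i ^ n = Poly_Mapping.single (Poly_Mapping.single i n) 1"
  by (induction n) (auto simp: var_def mult_single simp flip: single_add)

lemma prod_single_1:
  "finite I \<Longrightarrow> (\<Prod>i\<in>I. Poly_Mapping.single (F i) (1::'a::comm_semiring_1)) = Poly_Mapping.single (sum F I) 1"
  by (induction I rule: finite_induct) (auto simp: mult_single)

lemma sum_single_lookup: "(\<Sum>i\<in>(UNIV::'n::finite set). Poly_Mapping.single i (Poly_Mapping.lookup k i)) = k"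
  by (rule poly_mapping_eqI) (simp add: lookup_sum lookup_single when_def)

lemma lin_subst_mat_1: "lin_subst (mat 1) f = f"
proof -
  have monom: "subst_monom (mat 1) k = Poly_Mapping.single k 1" for k
    by (simp add: subst_monom_def lin_form_mat_1 var_power prod_single_1 sum_single_lookup)
  show ?thesis
    by (simp add: lin_subst_def monom const_def mult_single poly_mapping_sum_single)
qed

section \<open>Degrees, homogeneity and evaluation\<close>

lemma mdeg_add: "mdeg (a + b) = mdeg a + mdeg b"
  by (simp add: mdeg_def lookup_add sum.distrib)

lemma mdeg_eq_0_iff: "mdeg (m::'n::finite \<Rightarrow>\<^sub>0 nat) = 0 \<longleftrightarrow> m = 0"
proof
  assume "mdeg m = 0"
  then show "m = 0" by (intro poly_mapping_eqI) (simp add: mdeg_def)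
qed (simp add: mdeg_def)

lemma mdeg_single: "mdeg (Poly_Mapping.single (j::'n::finite) n) = n"
proof -
  have "mdeg (Poly_Mapping.single j n) = (\<Sum>i\<in>UNIV. if i = j then n else 0)"
    unfolding mdeg_def by (rule sum.cong) (auto simp: lookup_single when_def)
  then show ?thesis by simp
qed

lemma finite_mdeg_eq: "finite {m::'n::finite \<Rightarrow>\<^sub>0 nat. mdeg m = d}"
proof -
  have "Poly_Mapping.lookup ` {m. mdeg m = d} \<subseteq> PiE (UNIV::'n set) (\<lambda>_. {..d})"
  proof
    fix f assume "f \<in> Poly_Mapping.lookup ` {m. mdeg m = d}"
    then obtain m where m: "f = Poly_Mapping.lookup m" "mdeg m = d" by blast
    have "Poly_Mapping.lookup m i \<le> mdeg m" for i
      unfolding mdeg_def by (rule member_le_sum) auto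
    with m show "f \<in> PiE UNIV (\<lambda>_. {..d})" by auto
  qed
  then have "finite (Poly_Mapping.lookup ` {m::'n \<Rightarrow>\<^sub>0 nat. mdeg m = d})"
    by (rule finite_subset) (rule finite_PiE; simp)
  moreover have "inj_on Poly_Mapping.lookup {m::'n \<Rightarrow>\<^sub>0 nat. mdeg m = d}"
    by (rule inj_onI, rule poly_mapping_eqI) simp
  ultimately show ?thesis by (rule finite_imageD)
qed

lemma lookup_mult_0_eq_0:
  fixes f g :: "('a::comm_ring_1, 'n::finite) pol"
  assumes "Poly_Mapping.lookup f 0 = 0"
  shows "Poly_Mapping.lookup (f * g) 0 = 0"
proof (rule ccontr)
  assume "Poly_Mapping.lookup (f * g) 0 \<noteq> 0"
  then obtain a b where "0 = a + b" "a \<in> Poly_Mapping.keys f"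
    using keys_mult by (blast dest: in_keys_iff[THEN iffD2])
  then have "a = 0" by (metis add_is_0 mdeg_add mdeg_eq_0_iff)
  with \<open>a \<in> Poly_Mapping.keys f\<close> assms show False by (simp add: in_keys_iff)
qed

lemma mval_0 [simp]: "mval 0 v = 1" by (simp add: mval_def)

lemma mval_add: "mval (a + b) v = mval a v * mval b v"
  by (simp add: mval_def lookup_add power_add prod.distrib)

lemma peval_superset:
  assumes "finite S" "Poly_Mapping.keys f \<subseteq> S"
  shows "peval f v = (\<Sum>m\<in>S. Poly_Mapping.lookup f m * mval m v)"
  unfolding peval_def by (rule sum_keys_superset[OF assms]) simp

lemma peval_0 [simp]: "peval 0 v = 0" by (simp add: peval_def)

lemma peval_add: "peval (f + g) v = peval f v + peval g v"
proof -
  let ?S = "Poly_Mapping.keys f \<union> Poly_Mapping.keys g"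
  have "peval (f + g) v = (\<Sum>m\<in>?S. Poly_Mapping.lookup (f + g) m * mval m v)"
    by (rule peval_superset) (auto dest: keys_add[THEN subsetD])
  also have "\<dots> = peval f v + peval g v"
    by (simp add: lookup_add distrib_right sum.distrib peval_superset[of ?S])
  finally show ?thesis .
qed

lemma peval_sum: "peval (sum F I) v = (\<Sum>i\<in>I. peval (F i) v)"
  by (induction I rule: infinite_finite_induct) (auto simp: peval_add)

lemma peval_single: "peval (Poly_Mapping.single k c) v = c * mval k v"
  by (cases "c = 0") (auto simp: peval_def)

lemma peval_mult: "peval (f * g) v = peval f v * peval g v"
proof -
  have "peval (f * g) v = (\<Sum>a\<in>Poly_Mapping.keys f. \<Sum>b\<in>Poly_Mapping.keys g.
      peval (Poly_Mapping.single a (Poly_Mapping.lookup f a)) v *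
      peval (Poly_Mapping.single b (Poly_Mapping.lookup g b)) v)"
    by (subst mult_eq_double_sum_single) (simp add: peval_sum mult_single peval_single mval_add mult_ac)
  also have "\<dots> = peval (\<Sum>a\<in>Poly_Mapping.keys f. Poly_Mapping.single a (Poly_Mapping.lookup f a)) v *
      peval (\<Sum>b\<in>Poly_Mapping.keys g. Poly_Mapping.single b (Poly_Mapping.lookup g b)) v"
    by (simp add: peval_sum sum_product)
  finally show ?thesis by (simp only: poly_mapping_sum_single)
qed

lemma peval_1 [simp]: "peval 1 v = 1"
  using peval_single[of 0 1 v] by simp

lemma peval_const: "peval (const c) v = c" by (simp add: const_def peval_single)

lemma peval_power: "peval (p ^ n) v = peval p v ^ n"
  by (induction n) (auto simp: peval_mult)

lemma peval_prod: "peval (prod F I) v = (\<Prod>i\<in>I. peval (F i) v)"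
  by (induction I rule: infinite_finite_induct) (auto simp: peval_mult)

lemma peval_var: "peval (var j) (v::'a::comm_ring_1 ^ 'n::finite) = v $ j"
proof -
  have "mval (Poly_Mapping.single j 1) v = (\<Prod>i\<in>UNIV. if i = j then v $ i else 1)"
    unfolding mval_def by (rule prod.cong) (auto simp: lookup_single when_def)
  then show ?thesis by (simp add: var_def peval_single)
qed

lemma peval_lin_form: "peval (lin_form M i) v = (M *v v) $ i"
  by (simp add: lin_form_def peval_sum peval_mult peval_const peval_var matrix_vector_mult_def)

lemma peval_subst_monom: "peval (subst_monom M k) v = mval k (M *v v)"
  by (simp add: subst_monom_def peval_prod peval_power peval_lin_form mval_def)

lemma homog_0 [simp]: "homog d 0" by (simp add: homog_def)

lemma homog_add: "homog d p \<Longrightarrow> homog d q \<Longrightarrow> homog d (p + q)"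
  unfolding homog_def by (auto dest: keys_add[THEN subsetD])

lemma homog_mult: "homog a p \<Longrightarrow> homog b q \<Longrightarrow> homog (a + b) (p * q)"
  unfolding homog_def by (auto dest!: keys_mult[THEN subsetD] simp: mdeg_add)

lemma homog_sum: "(\<And>i. i \<in> I \<Longrightarrow> homog d (F i)) \<Longrightarrow> homog d (sum F I)"
  by (induction I rule: infinite_finite_induct) (auto intro: homog_add)

lemma homog_1: "homog 0 (1 :: ('a::zero_neq_one, 'n::finite) pol)"
  by (simp add: homog_def mdeg_def)

lemma homog_const: "homog 0 (const c :: ('a::zero, 'n::finite) pol)"
  by (simp add: homog_def mdeg_def const_def)

lemma homog_var: "homog 1 (var j :: ('a::{zero,one}, 'n::finite) pol)"
  by (simp add: homog_def var_def mdeg_single)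

lemma homog_power: "homog d p \<Longrightarrow> homog (n * d) (p ^ n)"
  for p :: "('a::comm_ring_1, 'n::finite) pol"
  by (induction n) (auto simp: homog_1 dest: homog_mult)

lemma homog_prod: "(\<And>i. i \<in> I \<Longrightarrow> homog (D i) (F i)) \<Longrightarrow> homog (sum D I) (prod F I)"
  for F :: "_ \<Rightarrow> ('a::comm_ring_1, 'n::finite) pol"
  by (induction I rule: infinite_finite_induct) (auto simp: homog_1 intro: homog_mult)

lemma homog_lin_form: "homog 1 (lin_form M i)"
  unfolding lin_form_def
  by (rule homog_sum) (use homog_mult[OF homog_const homog_var] in simp)

lemma homog_subst_monom: "homog (mdeg k) (subst_monom M k)"
proof -
  have "homog (\<Sum>i\<in>UNIV. Poly_Mapping.lookup k i * 1) (subst_monom M k)"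
    unfolding subst_monom_def by (rule homog_prod) (rule homog_power[OF homog_lin_form])
  then show ?thesis by (simp add: mdeg_def)
qed

lemma hval_eq_sum_keys:
  "hval d f v = (\<Sum>m\<in>Poly_Mapping.keys f. if mdeg m = d then Poly_Mapping.lookup f m * mval m v else 0)"
  unfolding hval_def by (simp add: sum.inter_filter)

lemma hval_homog: "homog d p \<Longrightarrow> hval e p v = (if e = d then peval p v else 0)"
  unfolding hval_eq_sum_keys peval_def homog_def by (auto intro: sum.cong)

lemma hval_0_eq_lookup_0: "hval 0 f v = Poly_Mapping.lookup f 0"
proof -
  have "hval 0 f v = (\<Sum>m\<in>Poly_Mapping.keys f. if m = 0 then Poly_Mapping.lookup f 0 else 0)"
    unfolding hval_eq_sum_keys by (rule sum.cong) (auto simp: mdeg_eq_0_iff)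
  also have "\<dots> = Poly_Mapping.lookup f 0" by (auto simp: in_keys_iff)
  finally show ?thesis .
qed

lemma hval_superset:
  assumes "finite S" "Poly_Mapping.keys f \<subseteq> S"
  shows "hval d f v = (\<Sum>m\<in>S. if mdeg m = d then Poly_Mapping.lookup f m * mval m v else 0)"
  unfolding hval_eq_sum_keys
  by (rule sum_keys_superset[OF assms, where h = "\<lambda>m c. if mdeg m = d then c * mval m v else 0"]) simp

lemma hval_0 [simp]: "hval d 0 v = 0" by (simp add: hval_def)

lemma hval_add: "hval d (f + g) v = hval d f v + hval d g v"
proof -
  let ?S = "Poly_Mapping.keys f \<union> Poly_Mapping.keys g"
  have "hval d (f + g) v =
      (\<Sum>m\<in>?S. if mdeg m = d then Poly_Mapping.lookup (f + g) m * mval m v else 0)"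
    by (rule hval_superset) (auto dest: keys_add[THEN subsetD])
  also have "\<dots> = hval d f v + hval d g v"
    by (auto simp: hval_superset[of ?S] lookup_add distrib_right simp flip: sum.distrib
        intro!: sum.cong)
  finally show ?thesis .
qed

lemma hval_sum: "hval d (sum F I) v = (\<Sum>i\<in>I. hval d (F i) v)"
  by (induction I rule: infinite_finite_induct) (auto simp: hval_add)

lemma hval_lin_subst: "hval d (lin_subst M f) v = hval d f (M *v v)"
proof -
  have "hval d (lin_subst M f) v =
      (\<Sum>m\<in>Poly_Mapping.keys f. hval d (const (Poly_Mapping.lookup f m) * subst_monom M m) v)"
    by (simp add: lin_subst_def hval_sum)
  also have "\<dots> = (\<Sum>m\<in>Poly_Mapping.keys f.
      if mdeg m = d then Poly_Mapping.lookup f m * mval m (M *v v) else 0)"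
  proof (rule sum.cong)
    fix m
    have "homog (0 + mdeg m) (const (Poly_Mapping.lookup f m) * subst_monom M m)"
      by (rule homog_mult[OF homog_const homog_subst_monom])
    then show "hval d (const (Poly_Mapping.lookup f m) * subst_monom M m) v =
        (if mdeg m = d then Poly_Mapping.lookup f m * mval m (M *v v) else 0)"
      by (auto simp: hval_homog peval_mult peval_const peval_subst_monom)
  qed simp
  also have "\<dots> = hval d f (M *v v)" by (simp add: hval_eq_sum_keys)
  finally show ?thesis .
qed

section \<open>Functionals and their annihilated ideals\<close>

lemma Dapply_superset:
  assumes "finite S" "Poly_Mapping.keys f \<subseteq> S"
  shows "Dapply \<psi> f = (\<Sum>m\<in>S. \<psi> m * Poly_Mapping.lookup f m)"
  unfolding Dapply_def by (rule sum_keys_superset[OF assms]) simp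

lemma Dapply_0 [simp]: "Dapply \<psi> 0 = 0" by (simp add: Dapply_def)

lemma Dapply_add: "Dapply \<psi> (f + g) = Dapply \<psi> f + Dapply \<psi> g"
proof -
  let ?S = "Poly_Mapping.keys f \<union> Poly_Mapping.keys g"
  have "Dapply \<psi> (f + g) = (\<Sum>m\<in>?S. \<psi> m * Poly_Mapping.lookup (f + g) m)"
    by (rule Dapply_superset) (auto dest: keys_add[THEN subsetD])
  also have "\<dots> = Dapply \<psi> f + Dapply \<psi> g"
    by (simp add: lookup_add distrib_left sum.distrib Dapply_superset[of ?S])
  finally show ?thesis .
qed

lemma Dapply_sum: "Dapply \<psi> (sum F I) = (\<Sum>i\<in>I. Dapply \<psi> (F i))"
  by (induction I rule: infinite_finite_induct) (auto simp: Dapply_add)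

lemma Dapply_single: "Dapply \<psi> (Poly_Mapping.single k c) = \<psi> k * c"
  by (cases "c = 0") (auto simp: Dapply_def)

lemma Dapply_const_mult: "Dapply \<psi> (const c * h) = c * Dapply \<psi> h"
proof -
  have "Dapply \<psi> (const c * h) =
      (\<Sum>m\<in>Poly_Mapping.keys h. \<psi> m * Poly_Mapping.lookup (const c * h) m)"
    by (rule Dapply_superset[OF finite_keys keys_const_mult])
  then show ?thesis
    by (simp add: Dapply_def sum_distrib_left lookup_const_mult mult.left_commute)
qed

lemma Dapply_scale: "Dapply (\<lambda>m. c * \<psi> m) g = c * Dapply \<psi> g"
  by (simp add: Dapply_def sum_distrib_left mult.assoc)

lemma Dapply_indicator_0: "Dapply (\<lambda>m. if m = 0 then 1 else 0) f = Poly_Mapping.lookup f 0"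
proof -
  have "Dapply (\<lambda>m. if m = 0 then 1 else 0) f =
      (\<Sum>m\<in>Poly_Mapping.keys f. if m = 0 then Poly_Mapping.lookup f 0 else 0)"
    unfolding Dapply_def by (rule sum.cong) auto
  also have "\<dots> = Poly_Mapping.lookup f 0" by (auto simp: in_keys_iff)
  finally show ?thesis .
qed

lemma Dapply_Dneg_homog_other:
  assumes "\<psi> \<in> Dneg j" "homog d h" "d \<noteq> j"
  shows "Dapply \<psi> h = 0"
  unfolding Dapply_def
proof (intro sum.neutral ballI)
  fix m assume "m \<in> Poly_Mapping.keys h"
  with assms have "\<psi> m = 0" unfolding Dneg_def homog_def by auto
  then show "\<psi> m * Poly_Mapping.lookup h m = 0" by simp
qed

lemma Dapply_mult_eq_0_if_perp:
  assumes "\<psi> \<in> perp J" "F \<in> J"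
  shows "Dapply \<psi> (F * G) = 0"
proof -
  have "contr F \<psi> = (\<lambda>_. 0)" using assms unfolding perp_def by blast
  then have monom: "Dapply \<psi> (F * Poly_Mapping.single m 1) = 0" for m
    unfolding contr_def by (rule fun_cong)
  have "F * G = (\<Sum>m\<in>Poly_Mapping.keys G.
      const (Poly_Mapping.lookup G m) * (F * Poly_Mapping.single m 1))"
    by (subst poly_mapping_sum_single[of G, symmetric], subst single_eq_const_mult)
      (simp add: sum_distrib_left mult_ac)
  then show ?thesis by (simp add: Dapply_sum Dapply_const_mult monom)
qed

lemma in_gen_sub_self: "\<phi> \<in> gen_sub \<phi>"
proof -
  have "contr 1 \<phi> = \<phi>" by (simp add: contr_def Dapply_single)
  then show ?thesis unfolding gen_sub_def by (metis (mono_tags, lifting) mem_Collect_eq)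
qed

lemma gen_sub_zero: "gen_sub (\<lambda>_. 0) = {\<lambda>_. 0}"
  by (auto simp: gen_sub_def contr_def Dapply_def)

lemma contr_same_degree_eq_scale:
  assumes \<phi>: "\<phi> \<in> Dneg d" and contr: "contr f \<phi> \<in> Dneg d"
  shows "contr f \<phi> = (\<lambda>k. Poly_Mapping.lookup f 0 * \<phi> k)"
proof
  fix k
  show "contr f \<phi> k = Poly_Mapping.lookup f 0 * \<phi> k"
  proof (cases "mdeg k = d")
    case True
    have "f * Poly_Mapping.single k 1 =
        (\<Sum>a\<in>Poly_Mapping.keys f. Poly_Mapping.single (a + k) (Poly_Mapping.lookup f a))"
      by (subst poly_mapping_sum_single[of f, symmetric]) (simp add: sum_distrib_right mult_single)
    then have "contr f \<phi> k = (\<Sum>a\<in>Poly_Mapping.keys f. \<phi> (a + k) * Poly_Mapping.lookup f a)"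
      by (simp add: contr_def Dapply_sum Dapply_single)
    also have "\<dots> = (\<Sum>a\<in>Poly_Mapping.keys f. if a = 0 then \<phi> k * Poly_Mapping.lookup f 0 else 0)"
    proof (rule sum.cong)
      fix a
      show "\<phi> (a + k) * Poly_Mapping.lookup f a = (if a = 0 then \<phi> k * Poly_Mapping.lookup f 0 else 0)"
      proof (cases "a = 0")
        case False
        then have "mdeg (a + k) \<noteq> d" using True by (simp add: mdeg_add mdeg_eq_0_iff)
        then have "\<phi> (a + k) = 0" using \<phi> unfolding Dneg_def by blast
        then show ?thesis using False by simp
      qed simp
    qed simp
    also have "\<dots> = Poly_Mapping.lookup f 0 * \<phi> k" by (auto simp: in_keys_iff)
    finally show ?thesis .
  next
    case False
    then have "contr f \<phi> k = 0" "\<phi> k = 0" using \<phi> contr unfolding Dneg_def by blast+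
    then show ?thesis by simp
  qed
qed

text \<open>The functional \<open>\<psi> \<circ> \<lambda>\<^sub>A\<close> of the paper, for \<open>M = A\<^sup>-\<^sup>1\<close>.\<close>
definition Dpullback ::
    "'a::comm_ring_1 ^ 'n::finite ^ 'n \<Rightarrow> (('n \<Rightarrow>\<^sub>0 nat) \<Rightarrow> 'a) \<Rightarrow> (('n \<Rightarrow>\<^sub>0 nat) \<Rightarrow> 'a)" where
  "Dpullback M \<psi> = (\<lambda>k. Dapply \<psi> (subst_monom M k))"

lemma Dapply_Dpullback: "Dapply (Dpullback M \<psi>) h = Dapply \<psi> (lin_subst M h)"
proof -
  have "Dapply (Dpullback M \<psi>) h =
      (\<Sum>m\<in>Poly_Mapping.keys h. Poly_Mapping.lookup h m * Dapply \<psi> (subst_monom M m))"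
    by (simp only: Dapply_def[of "Dpullback M \<psi>"]) (simp add: Dpullback_def mult.commute)
  also have "\<dots> = Dapply \<psi> (lin_subst M h)"
    by (simp add: lin_subst_def Dapply_sum Dapply_const_mult)
  finally show ?thesis .
qed

lemma Dpullback_Dneg:
  assumes "\<psi> \<in> Dneg d"
  shows "Dpullback M \<psi> \<in> Dneg d"
proof -
  have supp: "mdeg k = d" if "Dpullback M \<psi> k \<noteq> 0" for k
    using that Dapply_Dneg_homog_other[OF assms homog_subst_monom] by (auto simp: Dpullback_def)
  then have "finite {k. Dpullback M \<psi> k \<noteq> 0}"
    by (blast intro: finite_subset[OF _ finite_mdeg_eq])
  with supp show ?thesis by (simp add: Dneg_def Dmod_def)
qed

lemma Dpullback_perp:
  assumes \<psi>: "\<psi> \<in> Dneg d" "\<psi> \<in> perp J'" and maps: "\<And>f. f \<in> J \<Longrightarrow> lin_subst M f \<in> J'"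
  shows "Dpullback M \<psi> \<in> perp J"
  unfolding perp_def
proof (intro CollectI conjI ballI)
  show "Dpullback M \<psi> \<in> Dmod" using Dpullback_Dneg[OF \<psi>(1)] by (simp add: Dneg_def)
  fix f assume "f \<in> J"
  show "contr f (Dpullback M \<psi>) = (\<lambda>_. 0)"
    by (auto simp: contr_def Dapply_Dpullback lin_subst_mult
        intro: Dapply_mult_eq_0_if_perp[OF \<psi>(2) maps[OF \<open>f \<in> J\<close>]])
qed

lemma Dpullback_eq_0_imp_eq_0:
  assumes inv: "N ** M = mat 1" and zero: "Dpullback M \<psi> = (\<lambda>_. 0)"
  shows "\<psi> = (\<lambda>_. 0)"
proof
  fix k
  have "\<psi> k = Dapply \<psi> (lin_subst M (lin_subst N (Poly_Mapping.single k 1)))"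
    by (simp add: lin_subst_lin_subst inv lin_subst_mat_1 Dapply_single)
  also have "\<dots> = 0"
    using Dapply_Dpullback[of M \<psi> "lin_subst N (Poly_Mapping.single k 1)"]
    by (simp add: zero Dapply_def)
  finally show "\<psi> k = 0" .
qed

section \<open>Ideals of point sets\<close>

lemma lin_subst_vanishing_ideal:
  assumes inv: "M ** N = mat 1" and f: "f \<in> vanishing_ideal X"
  shows "lin_subst M f \<in> vanishing_ideal (Lam_pt N ` X)"
  unfolding vanishing_ideal_def
proof (intro allI ballI CollectI)
  fix d p' v' assume "p' \<in> Lam_pt N ` X" "v' \<in> p'"
  then obtain p w where "p \<in> X" "w \<in> p" "v' = N *v w" by (auto simp: Lam_pt_def)
  with f show "hval d (lin_subst M f) v' = 0"
    by (auto simp: hval_lin_subst matrix_vector_mul_assoc inv vanishing_ideal_def)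
qed

lemma lin_subst_ideal_plus_lin:
  assumes maps: "\<And>f. f \<in> I \<Longrightarrow> lin_subst M f \<in> I'" and f: "f \<in> ideal_plus_lin I L"
  shows "lin_subst M f \<in> ideal_plus_lin I' (lin_subst M L)"
proof -
  obtain i g where "f = i + L * g" "i \<in> I" using f unfolding ideal_plus_lin_def by blast
  then show ?thesis
    unfolding ideal_plus_lin_def by (auto simp: lin_subst_add lin_subst_mult intro: maps)
qed

lemma lam_ideal_plus_lin_vanishing_ideal:
  assumes "invertible A" "f \<in> ideal_plus_lin (vanishing_ideal X) L"
  shows "lam A f \<in> ideal_plus_lin (vanishing_ideal (Lam_pt A ` X)) (lam A L)"
  using lin_subst_ideal_plus_lin[OF lin_subst_vanishing_ideal[OF matrix_inv_mult(2)[OF assms(1)]]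
      assms(2)]
  by (simp add: lam_eq_lin_subst)

lemma dHF_0_ne_0_imp_nonempty: "dHF X 0 \<noteq> 0 \<Longrightarrow> X \<noteq> {}"
  by (auto simp: HF_def vanishing_ideal_def)

lemma lookup_0_ideal_plus_lin_vanishing_ideal:
  assumes "p \<in> X" "v \<in> p" "L \<in> Pd 1" "F \<in> ideal_plus_lin (vanishing_ideal X) L"
  shows "Poly_Mapping.lookup F 0 = 0"
proof -
  obtain i g where F: "F = i + L * g" "i \<in> vanishing_ideal X"
    using assms(4) unfolding ideal_plus_lin_def by blast
  have "Poly_Mapping.lookup i 0 = 0"
    using F(2) assms(1,2) by (simp add: vanishing_ideal_def flip: hval_0_eq_lookup_0[of i v])
  moreover have "0 \<notin> Poly_Mapping.keys L"
    using assms(3) by (auto simp: Pd_def homog_def mdeg_def)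
  then have "Poly_Mapping.lookup L 0 = 0" by (simp add: in_keys_iff)
  ultimately show ?thesis by (simp add: F lookup_add lookup_mult_0_eq_0)
qed

lemma indicator_0_in_perp:
  assumes "X \<noteq> {}" "X \<subseteq> proj_points" "L \<in> Pd 1"
  shows "(\<lambda>m. if m = 0 then 1 else 0) \<in> perp (ideal_plus_lin (vanishing_ideal X) L)"
proof -
  obtain v where "proj_pt v \<in> X" using assms(1,2) unfolding proj_points_def by blast
  moreover have "v \<in> proj_pt v" unfolding proj_pt_def by (auto intro: exI[of _ 1])
  ultimately show ?thesis
    using lookup_0_ideal_plus_lin_vanishing_ideal[OF _ _ assms(3)]
    by (auto simp: perp_def Dmod_def contr_def Dapply_indicator_0 lookup_mult_0_eq_0)
qed

lemma perp_generator_ne_0: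
  assumes "X \<noteq> {}" "X \<subseteq> proj_points" "L \<in> Pd 1"
    and perp: "perp (ideal_plus_lin (vanishing_ideal X) L) = gen_sub \<phi>"
  shows "\<phi> \<noteq> (\<lambda>_. 0)"
proof
  assume \<phi>_0: "\<phi> = (\<lambda>_. 0)"
  have "(\<lambda>m. if m = 0 then 1 else 0) \<in> gen_sub \<phi>"
    using indicator_0_in_perp[OF assms(1-3)] perp by simp
  then show False by (simp add: \<phi>_0 gen_sub_zero fun_eq_iff) (metis one_neq_zero)
qed

theorem proposition9p1:
  fixes X X' :: "('a::{finite,field} ^ 'n::finite) set set"
    and L L' :: "('a, 'n) pol"
    and phi phi' :: "('n \<Rightarrow>\<^sub>0 nat) \<Rightarrow> 'a"
    and A :: "'a ^ 'n ^ 'n"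
  assumes XP: "X \<subseteq> proj_points" and XP': "X' \<subseteq> proj_points"
    and AG: "arith_gorenstein X" and AG': "arith_gorenstein X'"
    and HF: "\<And>i. dHF X i = (if i = 0 \<or> i = 3 then 1 else if i = 1 \<or> i = 2 then int CARD('n) - 1 else 0)"
    and HF': "\<And>i. dHF X' i = dHF X i"
    and L: "L \<in> Pd 1" and L': "L' \<in> Pd 1"
    and Lnv: "\<forall>p\<in>X. \<forall>v\<in>p. peval L v \<noteq> 0"
    and Lnv': "\<forall>p\<in>X'. \<forall>v\<in>p. peval L' v \<noteq> 0"
    and phi: "phi \<in> Dneg 3" and phi': "phi' \<in> Dneg 3"
    and perp: "perp (ideal_plus_lin (vanishing_ideal X) L) = gen_sub phi"
    and perp': "perp (ideal_plus_lin (vanishing_ideal X') L') = gen_sub phi'"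
    and A: "invertible A"
    and AL: "lam A L = L'"
    and AX: "Lam_pt A ` X = X'"
  shows "\<exists>c. c \<noteq> 0 \<and> (\<forall>g\<in>Pd 3. Dapply phi' (lam A g) = c * Dapply phi g)"
proof -
  \<comment> \<open>The Gorenstein hypotheses and the nonvanishing of \<open>L\<close>, \<open>L'\<close> enter only through the
    generators \<open>phi\<close>, \<open>phi'\<close>; of the Hilbert function only \<open>HF\<^sub>X\<^sub>'(0) = 1\<close> is used.\<close>
  define M where "M = matrix_inv A"
  define \<psi> where "\<psi> = Dpullback M phi'"
  have lam: "lam A g = lin_subst M g" for g by (simp add: M_def lam_eq_lin_subst)
  have maps: "lin_subst M f \<in> ideal_plus_lin (vanishing_ideal X') L'"
    if "f \<in> ideal_plus_lin (vanishing_ideal X) L" for f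
    using lam_ideal_plus_lin_vanishing_ideal[OF A that] AX AL by (simp add: lam)
  have "\<psi> \<in> perp (ideal_plus_lin (vanishing_ideal X) L)"
    unfolding \<psi>_def by (rule Dpullback_perp[OF phi' _ maps]) (use perp' in_gen_sub_self in blast)
  then obtain f where \<psi>_contr: "\<psi> = contr f phi" using perp by (auto simp: gen_sub_def)
  have "\<psi> \<in> Dneg 3" unfolding \<psi>_def by (rule Dpullback_Dneg[OF phi'])
  then have \<psi>_eq: "\<psi> = (\<lambda>k. Poly_Mapping.lookup f 0 * phi k)"
    unfolding \<psi>_contr by (rule contr_same_degree_eq_scale[OF phi])
  have "X' \<noteq> {}" using HF[of 0] HF'[of 0] by (intro dHF_0_ne_0_imp_nonempty) simp
  then have "phi' \<noteq> (\<lambda>_. 0)" by (rule perp_generator_ne_0[OF _ XP' L' perp'])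
  then have "Poly_Mapping.lookup f 0 \<noteq> 0"
    using Dpullback_eq_0_imp_eq_0[OF matrix_inv_mult(1)[OF A]] \<psi>_eq by (auto simp: \<psi>_def M_def)
  moreover have "Dapply phi' (lam A g) = Poly_Mapping.lookup f 0 * Dapply phi g" for g
    by (simp add: lam flip: Dapply_Dpullback \<psi>_def add: \<psi>_eq Dapply_scale)
  ultimately show ?thesis by blast
qed

end
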